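(* Let $T$ be a forest, $A\in\mathcal R(T)$ and $c\ge1$. If $T_1,\dots,T_c$ are mutually independent subtrees of $T$ and $A[T_i]$ is invertible for each $i\in[c]$, then $$\mathrm{nullity}(A)\le P\bigl(T\setminus(T_1\cup\dots\cup T_c)\bigr).$$
   Context: For a forest $T$ with vertices identified with $\{1,\dots,n\}$, $\mathcal R(T)$ is the set of real $n\times n$ matrices $A=(a_{ij})$ with $a_{ij}\ne0$ iff $\{i,j\}\in E(T)$ for $i\neq j$, and $a_{ij}a_{ji}>0$ on every edge; diagonal entries arbitrary. $A[T_i]$ is the principal submatrix indexed by $V(T_i)$. Two subtrees $T_1,T_2$ of $T$ are independent if no edge of $T$ joins a vertex of $T_1$ to a vertex of $T_2$. A path cover of a graph $G$ is a set of vertex-disjoint induced paths whose vertex sets cover $V(G)$; $P(G)$, the path cover number, is the minimum number of paths in a path cover. $T\setminus(T_1\cup\dots\cup T_c)$ is the induced subgraph on the remaining vertices. *)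

theory Defs
  imports "Jordan_Normal_Form.DL_Submatrix" "Jordan_Normal_Form.Matrix_Kernel"
begin

definition simple_graph_on :: "nat \<Rightarrow> nat set set \<Rightarrow> bool" where
  "simple_graph_on n E \<longleftrightarrow> (\<forall>e\<in>E. \<exists>i j. i < n \<and> j < n \<and> i \<noteq> j \<and> e = {i, j})"

definition is_cycle :: "nat set set \<Rightarrow> nat list \<Rightarrow> bool" where
  "is_cycle E xs \<longleftrightarrow> length xs \<ge> 3 \<and> distinct xs \<and>
     (\<forall>k. Suc k < length xs \<longrightarrow> {xs ! k, xs ! Suc k} \<in> E) \<and> {last xs, hd xs} \<in> E"

definition forest :: "nat \<Rightarrow> nat set set \<Rightarrow> bool" where
  "forest n E \<longleftrightarrow> simple_graph_on n E \<and> (\<nexists>xs. is_cycle E xs)"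

definition in_R :: "nat \<Rightarrow> nat set set \<Rightarrow> real mat \<Rightarrow> bool" where
  "in_R n E A \<longleftrightarrow> A \<in> carrier_mat n n \<and>
     (\<forall>i<n. \<forall>j<n. i \<noteq> j \<longrightarrow>
        (A $$ (i, j) \<noteq> 0 \<longleftrightarrow> {i, j} \<in> E) \<and>
        ({i, j} \<in> E \<longrightarrow> A $$ (i, j) * A $$ (j, i) > 0))"

text \<open>A subtree of T, given by its vertex set S: a nonempty set of vertices
  inducing a connected subgraph of T (in a forest such a subgraph is a tree,
  and every subtree is induced by its vertex set).\<close>

definition is_subtree :: "nat \<Rightarrow> nat set set \<Rightarrow> nat set \<Rightarrow> bool" where
  "is_subtree n E S \<longleftrightarrow> S \<noteq> {} \<and> S \<subseteq> {0..<n} \<and>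
     (\<forall>u\<in>S. \<forall>v\<in>S. (\<lambda>x y. x \<in> S \<and> y \<in> S \<and> {x, y} \<in> E)\<^sup>*\<^sup>* u v)"

definition independent_subtrees :: "nat set set \<Rightarrow> nat set \<Rightarrow> nat set \<Rightarrow> bool" where
  "independent_subtrees E S1 S2 \<longleftrightarrow> (\<forall>u\<in>S1. \<forall>v\<in>S2. {u, v} \<notin> E)"

definition induced_path :: "nat set set \<Rightarrow> nat list \<Rightarrow> bool" where
  "induced_path E xs \<longleftrightarrow> xs \<noteq> [] \<and> distinct xs \<and>
     (\<forall>i<length xs. \<forall>j<length xs. {xs ! i, xs ! j} \<in> E \<longleftrightarrow> (i + 1 = j \<or> j + 1 = i))"

definition path_cover :: "nat set set \<Rightarrow> nat set \<Rightarrow> nat list set \<Rightarrow> bool" where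
  "path_cover E W C \<longleftrightarrow> finite C \<and> (\<forall>p\<in>C. induced_path E p \<and> set p \<subseteq> W) \<and>
     (\<forall>p\<in>C. \<forall>q\<in>C. p \<noteq> q \<longrightarrow> set p \<inter> set q = {}) \<and>
     (\<Union>p\<in>C. set p) = W"

definition path_cover_number :: "nat set set \<Rightarrow> nat set \<Rightarrow> nat" where
  "path_cover_number E W = (LEAST k. \<exists>C. path_cover E W C \<and> card C = k)"

end

theory Submission
  imports Defs
begin

text \<open>Let \<open>U\<close> be the union of the subtrees and \<open>C\<close> a minimum path cover of \<open>T - U\<close>. A kernel
  vector of \<open>A\<close> that vanishes at the first vertex of every path of \<open>C\<close> vanishes everywhere, so
  the nullity is at most \<open>|C|\<close>. This is proved by induction on the number of vertices, removing
  a leaf \<open>v\<close> of the forest. If \<open>a\<^sub>v\<^sub>v \<noteq> 0\<close> we pivot on \<open>v\<close>; since \<open>v\<close> is a leaf the Schur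
  complement has the same off-diagonal pattern. If \<open>a\<^sub>v\<^sub>v = 0\<close>, row \<open>v\<close> forces the kernel vector
  to vanish at the unique neighbour \<open>u\<close> of \<open>v\<close>, and both \<open>u\<close> and \<open>v\<close> are deleted. Invertibility
  of \<open>A[U]\<close> is what makes this work inside \<open>U\<close>: it survives both operations, and a leaf of
  \<open>U\<close> with \<open>a\<^sub>v\<^sub>v = 0\<close> has its neighbour in \<open>U\<close>. A leaf outside \<open>U\<close> is an end of its path;
  deleting it (and possibly its neighbour) shortens the path, and when it is the first vertex
  the new first vertex is forced to vanish by row \<open>v\<close>.\<close>

section \<open>Leaves of forests\<close>

definition is_path :: "nat set set \<Rightarrow> nat list \<Rightarrow> bool" where
  "is_path E p \<longleftrightarrow> p \<noteq> [] \<and> distinct p \<and> successively (\<lambda>x y. {x, y} \<in> E) p"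

definition degree_le_one :: "nat set set \<Rightarrow> nat set \<Rightarrow> nat \<Rightarrow> bool" where
  "degree_le_one E V v \<longleftrightarrow>
     (\<forall>w\<in>V. \<forall>w'\<in>V. w \<noteq> v \<longrightarrow> w' \<noteq> v \<longrightarrow> {v, w} \<in> E \<longrightarrow> {v, w'} \<in> E \<longrightarrow> w = w')"

lemma degree_le_oneD:
  "degree_le_one E V v \<Longrightarrow> w \<in> V \<Longrightarrow> w' \<in> V \<Longrightarrow> w \<noteq> v \<Longrightarrow> w' \<noteq> v \<Longrightarrow>
    {v, w} \<in> E \<Longrightarrow> {v, w'} \<in> E \<Longrightarrow> w = w'"
  unfolding degree_le_one_def by blast

lemma is_cycle_iff_successively:
  "is_cycle E xs \<longleftrightarrow> 3 \<le> length xs \<and> distinct xs \<and>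
     successively (\<lambda>x y. {x, y} \<in> E) xs \<and> {last xs, hd xs} \<in> E"
  by (simp add: is_cycle_def successively_conv_nth)

lemma longest_path_exists:
  assumes "finite V" "V \<noteq> {}"
  obtains xs where "is_path E xs" "set xs \<subseteq> V"
    "\<And>ys. is_path E ys \<Longrightarrow> set ys \<subseteq> V \<Longrightarrow> length ys \<le> length xs"
proof -
  let ?P = "\<lambda>xs. is_path E xs \<and> set xs \<subseteq> V"
  obtain v where "v \<in> V" using assms(2) by blast
  then have "?P [v]" by (simp add: is_path_def)
  moreover have "\<forall>ys. ?P ys \<longrightarrow> length ys < Suc (card V)"
  proof (intro allI impI)
    fix ys assume "?P ys"
    then have "length ys = card (set ys)" by (simp add: is_path_def distinct_card)
    moreover have "card (set ys) \<le> card V" using \<open>?P ys\<close> card_mono[OF assms(1)] by simp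
    ultimately show "length ys < Suc (card V)" by simp
  qed
  ultimately obtain xs where "?P xs" "\<forall>ys. ?P ys \<longrightarrow> length ys \<le> length xs"
    using Lattices_Big.ex_has_greatest_nat[of ?P "[v]" length] by blast
  then show ?thesis using that by blast
qed

text \<open>A neighbour outside a longest path would extend it, and a neighbour on the path other
  than the predecessor would close a cycle.\<close>

lemma longest_path_last_neighbour:
  assumes acyclic: "\<nexists>xs. is_cycle E xs" and path: "is_path E xs" and xsV: "set xs \<subseteq> V"
    and longest: "\<And>ys. is_path E ys \<Longrightarrow> set ys \<subseteq> V \<Longrightarrow> length ys \<le> length xs"
    and w: "w \<in> V" "w \<noteq> last xs" "{last xs, w} \<in> E"
  shows "\<exists>ys. xs = ys @ [w, last xs]"
proof -
  have dist: "distinct xs" and succ: "successively (\<lambda>x y. {x, y} \<in> E) xs"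
    using path by (auto simp: is_path_def)
  have "w \<in> set xs"
  proof (rule ccontr)
    assume "w \<notin> set xs"
    then have "is_path E (xs @ [w])" "set (xs @ [w]) \<subseteq> V"
      using path xsV w by (auto simp: is_path_def successively_append_iff)
    then show False using longest by fastforce
  qed
  then obtain ys zs where xs: "xs = ys @ w # zs" by (meson split_list)
  have zs_ne: "zs \<noteq> []" and last_zs: "last zs = last xs"
    using w(2) by (auto simp: xs)
  have "zs = [last xs]"
  proof (rule ccontr)
    assume "zs \<noteq> [last xs]"
    with zs_ne last_zs have "3 \<le> length (w # zs)"
      by (cases zs rule: rev_cases) (auto simp: Suc_le_eq)
    moreover have "distinct (w # zs)" "successively (\<lambda>x y. {x, y} \<in> E) (w # zs)"
      using dist succ by (auto simp: xs successively_append_iff)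
    moreover have "{last (w # zs), hd (w # zs)} \<in> E" using zs_ne last_zs w(3) by simp
    ultimately show False using acyclic by (auto simp: is_cycle_iff_successively)
  qed
  then show ?thesis using xs by auto
qed

lemma acyclic_degree_le_one_exists:
  assumes "finite V" "V \<noteq> {}" and acyclic: "\<nexists>xs. is_cycle E xs"
  shows "\<exists>v\<in>V. degree_le_one E V v"
proof -
  obtain xs where path: "is_path E xs" and xsV: "set xs \<subseteq> V"
    and longest: "\<And>ys. is_path E ys \<Longrightarrow> set ys \<subseteq> V \<Longrightarrow> length ys \<le> length xs"
    using longest_path_exists[OF assms(1,2)] by blast
  have "last xs \<in> V" using path xsV by (auto simp: is_path_def)
  moreover have "degree_le_one E V (last xs)"
    unfolding degree_le_one_def
  proof (intro ballI impI)
    fix w w' assume "w \<in> V" "w' \<in> V" "w \<noteq> last xs" "w' \<noteq> last xs"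
      "{last xs, w} \<in> E" "{last xs, w'} \<in> E"
    then obtain ys ys' where "xs = ys @ [w, last xs]" "xs = ys' @ [w', last xs]"
      using longest_path_last_neighbour[OF acyclic path xsV longest] by meson
    then have "rev xs = last xs # w # rev ys" "rev xs = last xs # w' # rev ys'" by simp_all
    then show "w = w'" by simp
  qed
  ultimately show ?thesis by blast
qed

section \<open>Kernels of principal blocks\<close>

definition kernel_on :: "(nat \<Rightarrow> nat \<Rightarrow> 'a::field) \<Rightarrow> nat set \<Rightarrow> (nat \<Rightarrow> 'a) \<Rightarrow> bool" where
  "kernel_on a V x \<longleftrightarrow> (\<forall>i\<in>V. (\<Sum>j\<in>V. a i j * x j) = 0)"

definition nonsingular_on :: "(nat \<Rightarrow> nat \<Rightarrow> 'a::field) \<Rightarrow> nat set \<Rightarrow> bool" where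
  "nonsingular_on a U \<longleftrightarrow> (\<forall>y. kernel_on a U y \<longrightarrow> (\<forall>j\<in>U. y j = 0))"

definition schur_complement :: "(nat \<Rightarrow> nat \<Rightarrow> 'a::field) \<Rightarrow> nat \<Rightarrow> nat \<Rightarrow> nat \<Rightarrow> 'a" where
  "schur_complement a v i j = a i j - a i v * a v j / a v v"

lemma sum_schur_complement:
  "(\<Sum>j\<in>J. schur_complement a v i j * x j)
    = (\<Sum>j\<in>J. a i j * x j) - a i v / a v v * (\<Sum>j\<in>J. a v j * x j)"
proof -
  have "schur_complement a v i j * x j = a i j * x j - a i v / a v v * (a v j * x j)" for j
    by (simp add: schur_complement_def left_diff_distrib)
  then show ?thesis by (simp add: sum_subtractf sum_distrib_left)
qed

lemma kernel_on_schur_complement: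
  assumes "finite V" "v \<in> V" "a v v \<noteq> 0" "kernel_on a V x"
  shows "kernel_on (schur_complement a v) (V - {v}) x"
  unfolding kernel_on_def
proof
  fix i assume i: "i \<in> V - {v}"
  have row: "(\<Sum>j\<in>V - {v}. a k j * x j) = - (a k v * x v)" if "k \<in> V" for k
  proof -
    have "(\<Sum>j\<in>V. a k j * x j) = a k v * x v + (\<Sum>j\<in>V - {v}. a k j * x j)"
      using assms(1,2) by (rule sum.remove)
    then show ?thesis using assms(4) that by (simp add: kernel_on_def eq_neg_iff_add_eq_0 add.commute)
  qed
  have "(\<Sum>j\<in>V - {v}. schur_complement a v i j * x j) = - (a i v * x v) + a i v / a v v * (a v v * x v)"
    using i assms(2) by (simp add: sum_schur_complement row)
  also have "\<dots> = 0" using assms(3) by simp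
  finally show "(\<Sum>j\<in>V - {v}. schur_complement a v i j * x j) = 0" .
qed

text \<open>Conversely, a kernel vector of the Schur complement extends to one of the whole block by
  solving row v for the missing coordinate.\<close>

lemma nonsingular_on_schur_complement:
  assumes "finite U" "v \<in> U" "a v v \<noteq> 0" "nonsingular_on a U"
  shows "nonsingular_on (schur_complement a v) (U - {v})"
  unfolding nonsingular_on_def
proof (intro allI impI)
  fix y assume ker: "kernel_on (schur_complement a v) (U - {v}) y"
  define y' where "y' = y(v := - (\<Sum>j\<in>U - {v}. a v j * y j) / a v v)"
  have y'v: "y' v = - (\<Sum>j\<in>U - {v}. a v j * y j) / a v v"
    by (simp add: y'_def)
  have split: "(\<Sum>j\<in>U. a i j * y' j) = a i v * y' v + (\<Sum>j\<in>U - {v}. a i j * y j)" for i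
    using sum.remove[OF assms(1,2), of "\<lambda>j. a i j * y' j"] by (simp add: y'_def)
  have "kernel_on a U y'"
    unfolding kernel_on_def
  proof
    fix i assume i: "i \<in> U"
    show "(\<Sum>j\<in>U. a i j * y' j) = 0"
    proof (cases "i = v")
      case True
      then show ?thesis using split[of v] assms(3) by (simp add: y'v)
    next
      case False
      have "(\<Sum>j\<in>U. a i j * y' j) = a i v * y' v + (\<Sum>j\<in>U - {v}. a i j * y j)"
        by (rule split)
      also have "\<dots> = (\<Sum>j\<in>U - {v}. schur_complement a v i j * y j)"
        unfolding sum_schur_complement using assms(3) by (simp add: y'v field_simps)
      also have "\<dots> = 0" using ker i False by (simp add: kernel_on_def)
      finally show ?thesis .
    qed
  qed
  then have zero: "\<forall>j\<in>U. y' j = 0" using assms(4) by (simp add: nonsingular_on_def)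
  show "\<forall>j\<in>U - {v}. y j = 0"
  proof
    fix j assume j: "j \<in> U - {v}"
    then have "y' j = y j" by (simp add: y'_def)
    then show "y j = 0" using zero j by simp
  qed
qed

lemma kernel_on_schur_complement_eq:
  assumes "\<forall>i\<in>U. a i v = 0"
  shows "kernel_on (schur_complement a v) U = kernel_on a U"
  using assms unfolding kernel_on_def schur_complement_def by auto

lemma kernel_on_Diff:
  assumes "finite V" "R \<subseteq> V" "kernel_on a V x" "\<forall>i\<in>V - R. \<forall>j\<in>R. a i j * x j = 0"
  shows "kernel_on a (V - R) x"
  unfolding kernel_on_def
proof
  fix i assume i: "i \<in> V - R"
  have "(\<Sum>j\<in>V. a i j * x j) = (\<Sum>j\<in>V - R. a i j * x j) + (\<Sum>j\<in>R. a i j * x j)"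
    using sum.subset_diff[OF assms(2,1)] by simp
  moreover have "(\<Sum>j\<in>R. a i j * x j) = 0"
    by (rule sum.neutral) (use assms(4) i in blast)
  ultimately show "(\<Sum>j\<in>V - R. a i j * x j) = 0"
    using assms(3) i by (simp add: kernel_on_def)
qed

lemma kernel_on_single_term:
  assumes "finite V" "kernel_on a V x" "i \<in> V" "u \<in> V" "a i u \<noteq> 0"
    "\<forall>j\<in>V - {u}. a i j * x j = 0"
  shows "x u = 0"
proof -
  have "(\<Sum>j\<in>V. a i j * x j) = a i u * x u"
    using sum.remove[OF assms(1,4), of "\<lambda>j. a i j * x j"] assms(6) by simp
  then show ?thesis using assms(2,3,5) by (simp add: kernel_on_def)
qed

lemma nonsingular_on_column_nonzero:
  assumes "finite U" "v \<in> U" "nonsingular_on a U"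
  shows "\<exists>u\<in>U. a u v \<noteq> 0"
proof (rule ccontr)
  assume "\<not> (\<exists>u\<in>U. a u v \<noteq> 0)"
  then have "kernel_on a U (\<lambda>j. if j = v then 1 else 0)"
    using assms(1,2) by (simp add: kernel_on_def if_distrib cong: if_cong)
  then show False using assms(2,3) by (fastforce simp: nonsingular_on_def)
qed

text \<open>A kernel vector of the smaller block extends to one of \<open>U\<close> by \<open>0\<close> at \<open>u\<close> and by the
  value at \<open>v\<close> that row \<open>u\<close> forces.\<close>

lemma nonsingular_on_Diff_pair:
  assumes "finite U" "u \<in> U" "v \<in> U" "u \<noteq> v" "a u v \<noteq> 0"
    "\<forall>i\<in>U - {u}. a i v = 0" "\<forall>j\<in>U - {u, v}. a v j = 0" "nonsingular_on a U"
  shows "nonsingular_on a (U - {u, v})"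
  unfolding nonsingular_on_def
proof (intro allI impI)
  fix y assume ker: "kernel_on a (U - {u, v}) y"
  define y' where "y' = y(u := 0, v := - (\<Sum>j\<in>U - {u, v}. a u j * y j) / a u v)"
  have split: "(\<Sum>j\<in>U. a i j * y' j) = a i v * y' v + (\<Sum>j\<in>U - {u, v}. a i j * y j)" for i
  proof -
    have "(\<Sum>j\<in>U. a i j * y' j) = (\<Sum>j\<in>{u, v}. a i j * y' j) + (\<Sum>j\<in>U - {u, v}. a i j * y' j)"
      using sum.subset_diff[of "{u, v}" U] assms(1-3) by (simp add: add.commute)
    then show ?thesis using assms(4) by (simp add: y'_def)
  qed
  have "kernel_on a U y'"
    unfolding kernel_on_def
  proof
    fix i assume i: "i \<in> U"
    consider "i = u" | "i = v" | "i \<in> U - {u, v}" using i by blast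
    then show "(\<Sum>j\<in>U. a i j * y' j) = 0"
    proof cases
      case 1
      then show ?thesis using split assms(5) by (simp add: y'_def)
    next
      case 2
      then show ?thesis using split assms(3,4,6,7) by simp
    next
      case 3
      then show ?thesis using split ker assms(6) by (simp add: kernel_on_def)
    qed
  qed
  then have zero: "\<forall>j\<in>U. y' j = 0" using assms(8) by (simp add: nonsingular_on_def)
  show "\<forall>j\<in>U - {u, v}. y j = 0"
  proof
    fix j assume j: "j \<in> U - {u, v}"
    then have "y' j = y j" by (simp add: y'_def)
    then show "y j = 0" using zero j by simp
  qed
qed

section \<open>Sparsity patterns and path partitions\<close>

definition has_pattern :: "nat set set \<Rightarrow> (nat \<Rightarrow> nat \<Rightarrow> 'a::zero) \<Rightarrow> nat set \<Rightarrow> bool" where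
  "has_pattern E a V \<longleftrightarrow> (\<forall>i\<in>V. \<forall>j\<in>V. i \<noteq> j \<longrightarrow> (a i j \<noteq> 0 \<longleftrightarrow> {i, j} \<in> E))"

lemma has_patternD:
  "has_pattern E a V \<Longrightarrow> i \<in> V \<Longrightarrow> j \<in> V \<Longrightarrow> i \<noteq> j \<Longrightarrow> a i j \<noteq> 0 \<longleftrightarrow> {i, j} \<in> E"
  unfolding has_pattern_def by blast

lemma has_pattern_subset: "has_pattern E a V \<Longrightarrow> W \<subseteq> V \<Longrightarrow> has_pattern E a W"
  unfolding has_pattern_def by blast

lemma has_pattern_leaf_zero:
  assumes "has_pattern E a V" "degree_le_one E V v" "v \<in> V" "u \<in> V" "u \<noteq> v" "{v, u} \<in> E"
    "j \<in> V - {u, v}"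
  shows "a v j = 0" "a j v = 0"
proof -
  have j: "j \<in> V" "j \<noteq> u" "j \<noteq> v" using assms(7) by auto
  have "{v, j} \<notin> E"
    using degree_le_oneD[OF assms(2) j(1) assms(4) j(3) assms(5) _ assms(6)] j(2) by blast
  moreover have "{j, v} = {v, j}" by (rule insert_commute)
  ultimately show "a v j = 0" "a j v = 0"
    using has_patternD[OF assms(1)] assms(3) j by (metis, metis)
qed

text \<open>Eliminating a leaf only changes the diagonal entry of its neighbour.\<close>

lemma has_pattern_schur_complement:
  assumes "has_pattern E a V" "v \<in> V" "degree_le_one E V v"
  shows "has_pattern E (schur_complement a v) (V - {v})"
  unfolding has_pattern_def
proof (intro ballI impI)
  fix i j assume i: "i \<in> V - {v}" and j: "j \<in> V - {v}" and "i \<noteq> j"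
  have "a i v = 0 \<or> a v j = 0"
  proof (rule ccontr)
    assume "\<not> (a i v = 0 \<or> a v j = 0)"
    then have "{i, v} \<in> E" "{v, j} \<in> E"
      using has_patternD[OF assms(1)] assms(2) i j by auto
    moreover have "{i, v} = {v, i}" by (rule insert_commute)
    ultimately have "i = j" using degree_le_oneD[OF assms(3)] i j by auto
    with \<open>i \<noteq> j\<close> show False by simp
  qed
  then have "schur_complement a v i j = a i j" by (auto simp: schur_complement_def)
  then show "(schur_complement a v i j \<noteq> 0) = ({i, j} \<in> E)"
    using has_patternD[OF assms(1)] i j \<open>i \<noteq> j\<close> by simp
qed

definition path_partition :: "nat set set \<Rightarrow> nat set \<Rightarrow> nat list set \<Rightarrow> bool" where
  "path_partition E W C \<longleftrightarrow> finite C \<and> (\<forall>p\<in>C. is_path E p \<and> set p \<subseteq> W) \<and>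
     (\<forall>p\<in>C. \<forall>q\<in>C. p \<noteq> q \<longrightarrow> set p \<inter> set q = {}) \<and> (\<Union>p\<in>C. set p) = W"

lemma path_partition_replace:
  assumes part: "path_partition E W C" and "p \<in> C" "R \<subseteq> set p" "set q = set p - R"
    "q \<noteq> [] \<Longrightarrow> is_path E q"
  shows "path_partition E (W - R) (C - {p} \<union> ({q} - {[]}))"
    (is "path_partition E _ ?C'")
proof -
  have paths: "\<forall>p'\<in>C. is_path E p' \<and> set p' \<subseteq> W"
    and disjoint: "\<forall>p1\<in>C. \<forall>p2\<in>C. p1 \<noteq> p2 \<longrightarrow> set p1 \<inter> set p2 = {}"
    and union: "(\<Union>p'\<in>C. set p') = W"
    using part by (simp_all add: path_partition_def)
  have avoid: "set p' \<inter> set p = {}" if "p' \<in> C - {p}" for p'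
    using disjoint that assms(2) by blast
  have "\<forall>p1\<in>?C'. \<forall>p2\<in>?C'. p1 \<noteq> p2 \<longrightarrow> set p1 \<inter> set p2 = {}"
  proof (intro ballI impI)
    fix p1 p2 assume p12: "p1 \<in> ?C'" "p2 \<in> ?C'" "p1 \<noteq> p2"
    then consider "p1 \<in> C - {p}" "p2 \<in> C - {p}" | "p1 = q" "p2 \<in> C - {p}"
      | "p1 \<in> C - {p}" "p2 = q" by auto
    then show "set p1 \<inter> set p2 = {}"
      by cases (use disjoint avoid assms(4) p12(3) in blast)+
  qed
  moreover have "\<forall>p'\<in>?C'. is_path E p' \<and> set p' \<subseteq> W - R"
  proof -
    have "set p' \<subseteq> W - R" if "p' \<in> C - {p}" for p'
      using paths avoid[OF that] assms(3) that by blast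
    moreover have "set q \<subseteq> W - R" using paths assms(2,4) by blast
    ultimately show ?thesis using paths assms(5) by auto
  qed
  moreover have "(\<Union>p'\<in>?C'. set p') = W - R"
  proof -
    have "(\<Union>p'\<in>?C'. set p') = (\<Union>p'\<in>C - {p}. set p') \<union> set q" by auto
    also have "\<dots> = W - R" using union avoid assms(2-4) by blast
    finally show ?thesis .
  qed
  moreover have "finite ?C'" using part by (simp add: path_partition_def)
  ultimately show ?thesis unfolding path_partition_def by (intro conjI)
qed

section \<open>Elimination of leaves\<close>

definition heads_determine :: "(nat \<Rightarrow> nat \<Rightarrow> 'a::field) \<Rightarrow> nat set \<Rightarrow> nat list set \<Rightarrow> bool" where
  "heads_determine a V C \<longleftrightarrow>
     (\<forall>x. kernel_on a V x \<longrightarrow> (\<forall>p\<in>C. x (hd p) = 0) \<longrightarrow> (\<forall>j\<in>V. x j = 0))"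

lemma heads_determineD:
  "heads_determine a V C \<Longrightarrow> kernel_on a V x \<Longrightarrow> \<forall>p\<in>C. x (hd p) = 0 \<Longrightarrow> j \<in> V \<Longrightarrow> x j = 0"
  unfolding heads_determine_def by blast

lemma heads_vanish_subset:
  assumes "\<forall>p\<in>C. x (hd p) = 0" "hd ` C' \<subseteq> hd ` C"
  shows "\<forall>p\<in>C'. x (hd p) = 0"
proof
  fix p assume "p \<in> C'"
  then have "hd p \<in> hd ` C" using assms(2) by blast
  then show "x (hd p) = 0" using assms(1) by auto
qed

lemma heads_determine_schur_complement:
  assumes "finite V" "v \<in> V" "a v v \<noteq> 0" "hd ` C' \<subseteq> hd ` C"
    "heads_determine (schur_complement a v) (V - {v}) C'"
  shows "heads_determine a V C"
  unfolding heads_determine_def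
proof (intro allI impI)
  fix x assume ker: "kernel_on a V x" and heads: "\<forall>p\<in>C. x (hd p) = 0"
  have rest: "\<forall>j\<in>V - {v}. x j = 0"
    using heads_determineD[OF assms(5) kernel_on_schur_complement[OF assms(1-3) ker]
        heads_vanish_subset[OF heads assms(4)]] by blast
  have "x v = 0"
    by (rule kernel_on_single_term[OF assms(1) ker assms(2) assms(2) assms(3)]) (use rest in simp)
  with rest show "\<forall>j\<in>V. x j = 0" by blast
qed

lemma heads_determine_remove_pair:
  assumes "finite V" "u \<in> V" "v \<in> V" "u \<noteq> v" "a u v \<noteq> 0" "a v u \<noteq> 0" "a v v = 0"
    "\<forall>j\<in>V - {u, v}. a v j = 0 \<and> a j v = 0" "hd ` C' \<subseteq> hd ` C"
    "heads_determine a (V - {u, v}) C'"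
  shows "heads_determine a V C"
  unfolding heads_determine_def
proof (intro allI impI)
  fix x assume ker: "kernel_on a V x" and heads: "\<forall>p\<in>C. x (hd p) = 0"
  have xu: "x u = 0"
    by (rule kernel_on_single_term[OF assms(1) ker assms(3,2,6)]) (use assms(7,8) in auto)
  have "kernel_on a (V - {u, v}) x"
    by (rule kernel_on_Diff[OF assms(1) _ ker]) (use assms(2,3,8) xu in auto)
  then have rest: "\<forall>j\<in>V - {u, v}. x j = 0"
    using heads_determineD[OF assms(10) _ heads_vanish_subset[OF heads assms(9)]] by blast
  have "x v = 0"
    by (rule kernel_on_single_term[OF assms(1) ker assms(2,3,5)]) (use rest xu in auto)
  with xu rest show "\<forall>j\<in>V. x j = 0" by blast
qed

lemma heads_determine_remove_head:
  assumes "finite V" "v \<in> V" "v \<in> hd ` C"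
    "\<forall>h\<in>hd ` C' - hd ` C. h \<in> V \<and> a v h \<noteq> 0 \<and> (\<forall>j\<in>V - {v, h}. a v j = 0)"
    "heads_determine a (V - {v}) C'"
  shows "heads_determine a V C"
  unfolding heads_determine_def
proof (intro allI impI)
  fix x assume ker: "kernel_on a V x" and heads: "\<forall>p\<in>C. x (hd p) = 0"
  have xv: "x v = 0" using heads assms(3) by auto
  have "kernel_on a (V - {v}) x"
    by (rule kernel_on_Diff[OF assms(1) _ ker]) (use assms(2) xv in auto)
  moreover have "\<forall>p\<in>C'. x (hd p) = 0"
  proof
    fix p assume "p \<in> C'"
    show "x (hd p) = 0"
    proof (cases "hd p \<in> hd ` C")
      case True
      then show ?thesis using heads by auto
    next
      case False
      then have h: "hd p \<in> V" "a v (hd p) \<noteq> 0" "\<forall>j\<in>V - {v, hd p}. a v j = 0"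
        using assms(4) \<open>p \<in> C'\<close> by auto
      show ?thesis
        by (rule kernel_on_single_term[OF assms(1) ker assms(2) h(1,2)]) (use h(3) xv in auto)
    qed
  qed
  ultimately have "\<forall>j\<in>V - {v}. x j = 0" using heads_determineD[OF assms(5)] by blast
  with xv show "\<forall>j\<in>V. x j = 0" by blast
qed

definition admissible ::
    "nat set set \<Rightarrow> (nat \<Rightarrow> nat \<Rightarrow> 'a::field) \<Rightarrow> nat set \<Rightarrow> nat set \<Rightarrow> nat list set \<Rightarrow> bool" where
  "admissible E a V U C \<longleftrightarrow> finite V \<and> has_pattern E a V \<and> U \<subseteq> V \<and> nonsingular_on a U \<and>
     path_partition E (V - U) C"

definition reducible :: "nat set set \<Rightarrow> (nat \<Rightarrow> nat \<Rightarrow> 'a::field) \<Rightarrow> nat set \<Rightarrow> nat list set \<Rightarrow> bool" where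
  "reducible E a V C \<longleftrightarrow> (\<exists>(a' :: nat \<Rightarrow> nat \<Rightarrow> 'a) V' U' C'. V' \<subset> V \<and> admissible E a' V' U' C' \<and>
     (heads_determine a' V' C' \<longrightarrow> heads_determine a V C))"

lemma reducibleI:
  fixes a a' :: "nat \<Rightarrow> nat \<Rightarrow> 'a::field"
  assumes "V' \<subset> V" "admissible E a' V' U' C'"
    "heads_determine a' V' C' \<Longrightarrow> heads_determine a V C"
  shows "reducible E a V C"
  unfolding reducible_def
  using assms by blast

lemma reducible_pivot_in_block:
  assumes adm: "admissible E a V U C" and leaf: "degree_le_one E V v"
    and "v \<in> U" "a v v \<noteq> 0"
  shows "reducible E a V C"
proof (rule reducibleI)
  have fin: "finite V" and pat: "has_pattern E a V" and UV: "U \<subseteq> V"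
    and nons: "nonsingular_on a U" and part: "path_partition E (V - U) C"
    using adm by (simp_all add: admissible_def)
  have v: "v \<in> V" using UV assms(3) by blast
  show "V - {v} \<subset> V" using v by blast
  have "V - {v} - (U - {v}) = V - U" using assms(3) by blast
  moreover have "nonsingular_on (schur_complement a v) (U - {v})"
    using nonsingular_on_schur_complement[OF _ assms(3,4) nons] fin UV finite_subset by blast
  ultimately show "admissible E (schur_complement a v) (V - {v}) (U - {v}) C"
    using fin has_pattern_schur_complement[OF pat v leaf] UV part by (auto simp: admissible_def)
  show "heads_determine a V C" if "heads_determine (schur_complement a v) (V - {v}) C"
    using heads_determine_schur_complement[OF fin v assms(4) _ that] by simp
qed

text \<open>A leaf \<open>v\<close> of the block with \<open>a v v = 0\<close> has its neighbour \<open>u\<close> in the block, because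
  column \<open>v\<close> of a nonsingular block cannot vanish.\<close>

lemma reducible_pair_in_block:
  assumes adm: "admissible E a V U C" and leaf: "degree_le_one E V v"
    and "v \<in> U" "a v v = 0"
  shows "reducible E a V C"
proof -
  have fin: "finite V" and pat: "has_pattern E a V" and UV: "U \<subseteq> V"
    and nons: "nonsingular_on a U" and part: "path_partition E (V - U) C"
    using adm by (simp_all add: admissible_def)
  have v: "v \<in> V" using UV assms(3) by blast
  have finU: "finite U" using fin UV finite_subset by blast
  obtain u where u: "u \<in> U" "a u v \<noteq> 0"
    using nonsingular_on_column_nonzero[OF finU assms(3) nons] by blast
  have "u \<noteq> v" using u(2) assms(4) by auto
  have uV: "u \<in> V" using u(1) UV by blast
  have "{u, v} \<in> E" using has_patternD[OF pat uV v \<open>u \<noteq> v\<close>] u(2) by simp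
  then have edge: "{v, u} \<in> E" by (simp add: insert_commute)
  have avu: "a v u \<noteq> 0" using has_patternD[OF pat v uV] \<open>u \<noteq> v\<close> edge by auto
  have zero: "\<forall>j\<in>V - {u, v}. a v j = 0 \<and> a j v = 0"
    using has_pattern_leaf_zero[OF pat leaf v uV \<open>u \<noteq> v\<close> edge] by blast
  show ?thesis
  proof (rule reducibleI)
    show "V - {u, v} \<subset> V" using v by blast
    have "nonsingular_on a (U - {u, v})"
      by (rule nonsingular_on_Diff_pair[OF finU u(1) assms(3) \<open>u \<noteq> v\<close> u(2) _ _ nons])
        (use zero UV assms(4) in auto)
    moreover have "V - {u, v} - (U - {u, v}) = V - U" using u(1) assms(3) by blast
    ultimately show "admissible E a (V - {u, v}) (U - {u, v}) C"
      using fin has_pattern_subset[OF pat, of "V - {u, v}"] UV part by (auto simp: admissible_def)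
    show "heads_determine a V C" if "heads_determine a (V - {u, v}) C"
      using heads_determine_remove_pair[OF fin uV v \<open>u \<noteq> v\<close> u(2) avu assms(4) zero _ that]
      by simp
  qed
qed

lemma reducible_path_head:
  assumes adm: "admissible E a V U C" and leaf: "degree_le_one E V v"
    and "p \<in> C" "p = v # q"
  shows "reducible E a V C"
proof -
  have fin: "finite V" and pat: "has_pattern E a V" and UV: "U \<subseteq> V"
    and nons: "nonsingular_on a U" and part: "path_partition E (V - U) C"
    using adm by (simp_all add: admissible_def)
  have pV: "set p \<subseteq> V - U" and path: "is_path E p"
    using part assms(3) by (auto simp: path_partition_def)
  then have v: "v \<in> V" "v \<notin> U" using assms(4) by auto
  have q: "set q = set p - {v}" "q \<noteq> [] \<Longrightarrow> is_path E q"
    using path assms(4) by (auto simp: is_path_def successively_Cons)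
  let ?C' = "C - {p} \<union> ({q} - {[]})"
  show ?thesis
  proof (rule reducibleI)
    show "V - {v} \<subset> V" using v by blast
    have "V - {v} - U = V - U - {v}" by blast
    moreover have "path_partition E (V - U - {v}) ?C'"
      by (rule path_partition_replace[OF part assms(3) _ q]) (simp add: assms(4))
    ultimately show "admissible E a (V - {v}) U ?C'"
      using fin has_pattern_subset[OF pat, of "V - {v}"] UV v(2) nons
      by (auto simp: admissible_def)
    show "heads_determine a V C" if "heads_determine a (V - {v}) ?C'"
    proof (rule heads_determine_remove_head[OF fin v(1) _ _ that])
      show "v \<in> hd ` C" using assms(3,4) by force
      show "\<forall>h\<in>hd ` ?C' - hd ` C. h \<in> V \<and> a v h \<noteq> 0 \<and> (\<forall>j\<in>V - {v, h}. a v j = 0)"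
      proof
        fix h assume "h \<in> hd ` ?C' - hd ` C"
        then have "q \<noteq> []" "h = hd q" by auto
        then have "{v, h} \<in> E" "h \<in> set q" "h \<noteq> v"
          using path assms(4) by (auto simp: is_path_def successively_Cons)
        then have "{v, h} \<in> E" "h \<in> V" "h \<noteq> v" using pV assms(4) by auto
        then show "h \<in> V \<and> a v h \<noteq> 0 \<and> (\<forall>j\<in>V - {v, h}. a v j = 0)"
          using has_patternD[OF pat v(1)] has_pattern_leaf_zero[OF pat leaf v(1)] by auto
      qed
    qed
  qed
qed

lemma admissible_path_end:
  assumes adm: "admissible E a V U C" and leaf: "degree_le_one E V v"
    and "p \<in> C" "p = q @ [u, v]"
  shows "u \<in> V - U" "v \<in> V - U" "u \<noteq> v" "{v, u} \<in> E"
    "\<forall>j\<in>V - {u, v}. a v j = 0 \<and> a j v = 0"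
proof -
  have "set p \<subseteq> V - U" "is_path E p"
    using adm assms(3) by (auto simp: admissible_def path_partition_def)
  then show uv: "u \<in> V - U" "v \<in> V - U" "u \<noteq> v" "{v, u} \<in> E"
    using assms(4) by (auto simp: is_path_def successively_append_iff insert_commute)
  have "has_pattern E a V" using adm by (simp add: admissible_def)
  from has_pattern_leaf_zero[OF this leaf _ _ uv(3,4)] uv(1,2)
  show "\<forall>j\<in>V - {u, v}. a v j = 0 \<and> a j v = 0" by blast
qed

text \<open>A leaf at the end of a path has no neighbour in the block, so pivoting on it leaves the
  block untouched.\<close>

lemma reducible_pivot_path_end:
  assumes adm: "admissible E a V U C" and leaf: "degree_le_one E V v"
    and "p \<in> C" "p = q @ [u, v]" "a v v \<noteq> 0"
  shows "reducible E a V C"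
proof -
  have fin: "finite V" and pat: "has_pattern E a V" and UV: "U \<subseteq> V"
    and nons: "nonsingular_on a U" and part: "path_partition E (V - U) C"
    using adm by (simp_all add: admissible_def)
  note ends = admissible_path_end[OF adm leaf assms(3,4)]
  let ?C' = "C - {p} \<union> ({q @ [u]} - {[]})"
  show ?thesis
  proof (rule reducibleI)
    show "V - {v} \<subset> V" using ends(2) by blast
    have "set (q @ [u]) = set p - {v}" "is_path E (q @ [u])"
      using part assms(3,4) by (auto simp: path_partition_def is_path_def successively_append_iff)
    then have "path_partition E (V - U - {v}) ?C'"
      by (intro path_partition_replace[OF part assms(3)]) (simp_all add: assms(4))
    moreover have "V - {v} - U = V - U - {v}" by blast
    moreover have "nonsingular_on (schur_complement a v) U"
    proof -
      have "\<forall>i\<in>U. a i v = 0" using ends UV by blast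
      then show ?thesis
        using nons kernel_on_schur_complement_eq[of U a v] by (simp add: nonsingular_on_def)
    qed
    ultimately show "admissible E (schur_complement a v) (V - {v}) U ?C'"
      using fin has_pattern_schur_complement[OF pat _ leaf] UV ends(2)
      by (auto simp: admissible_def)
    have "hd (q @ [u]) = hd p" by (simp add: assms(4) hd_append)
    then show "heads_determine a V C" if "heads_determine (schur_complement a v) (V - {v}) ?C'"
      by (intro heads_determine_schur_complement[OF fin _ assms(5) _ that]) (use assms(3) ends in auto)
  qed
qed

lemma reducible_pair_path_end:
  assumes adm: "admissible E a V U C" and leaf: "degree_le_one E V v"
    and "p \<in> C" "p = q @ [u, v]" "a v v = 0"
  shows "reducible E a V C"
proof -
  have fin: "finite V" and pat: "has_pattern E a V" and UV: "U \<subseteq> V"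
    and nons: "nonsingular_on a U" and part: "path_partition E (V - U) C"
    using adm by (simp_all add: admissible_def)
  note ends = admissible_path_end[OF adm leaf assms(3,4)]
  have avu: "a v u \<noteq> 0" "a u v \<noteq> 0"
    using has_patternD[OF pat, of v u] has_patternD[OF pat, of u v] ends(1-4)
    by (auto simp: insert_commute)
  let ?C' = "C - {p} \<union> ({q} - {[]})"
  show ?thesis
  proof (rule reducibleI)
    show "V - {u, v} \<subset> V" using ends(2) by blast
    have "set q = set p - {u, v}" "q \<noteq> [] \<Longrightarrow> is_path E q"
      using part assms(3,4) by (auto simp: path_partition_def is_path_def successively_append_iff)
    then have "path_partition E (V - U - {u, v}) ?C'"
      by (intro path_partition_replace[OF part assms(3)]) (simp_all add: assms(4))
    moreover have "V - {u, v} - U = V - U - {u, v}" by blast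
    ultimately show "admissible E a (V - {u, v}) U ?C'"
      using fin has_pattern_subset[OF pat, of "V - {u, v}"] UV ends(1,2) nons
      by (auto simp: admissible_def)
    have "hd q = hd p" if "q \<noteq> []" using that by (simp add: assms(4))
    then have "hd ` ?C' \<subseteq> hd ` C" using assms(3) by blast
    moreover have "u \<in> V" "v \<in> V" using ends by auto
    ultimately show "heads_determine a V C" if "heads_determine a (V - {u, v}) ?C'"
      using heads_determine_remove_pair[OF fin _ _ ends(3) avu(2,1) assms(5) ends(5) _ that] by simp
  qed
qed

lemma path_through_leaf:
  assumes "is_path E p" "set p \<subseteq> V" "degree_le_one E V v" "v \<in> set p"
  shows "v = hd p \<or> (\<exists>q u. p = q @ [u, v])"
proof (cases "v = hd p")
  case False
  obtain ys zs where p: "p = ys @ v # zs" using assms(4) by (meson split_list)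
  have "ys \<noteq> []" using False p by auto
  have "zs = []"
  proof (rule ccontr)
    assume "zs \<noteq> []"
    have "{v, last ys} \<in> E" "{v, hd zs} \<in> E"
      using assms(1) p \<open>ys \<noteq> []\<close> \<open>zs \<noteq> []\<close>
      by (auto simp: is_path_def successively_append_iff successively_Cons insert_commute)
    moreover have "last ys \<noteq> hd zs" "last ys \<noteq> v" "hd zs \<noteq> v"
      using assms(1) p last_in_set[OF \<open>ys \<noteq> []\<close>] hd_in_set[OF \<open>zs \<noteq> []\<close>]
      by (auto simp: is_path_def)
    moreover have "last ys \<in> V" "hd zs \<in> V"
      using assms(2) p \<open>ys \<noteq> []\<close> \<open>zs \<noteq> []\<close> by auto
    ultimately show False using degree_le_oneD[OF assms(3)] by blast
  qed
  then have "p = butlast ys @ [last ys, v]" using p \<open>ys \<noteq> []\<close> by simp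
  then show ?thesis by blast
qed simp

lemma admissible_reducible:
  assumes adm: "admissible E a V U C" and "V \<noteq> {}" and acyclic: "\<nexists>xs. is_cycle E xs"
  shows "reducible E a V C"
proof -
  have fin: "finite V" and part: "path_partition E (V - U) C"
    using adm by (simp_all add: admissible_def)
  obtain v where v: "v \<in> V" and leaf: "degree_le_one E V v"
    using acyclic_degree_le_one_exists[OF fin assms(2) acyclic] by blast
  show ?thesis
  proof (cases "v \<in> U")
    case True
    then show ?thesis
      using reducible_pivot_in_block[OF adm leaf] reducible_pair_in_block[OF adm leaf] by blast
  next
    case False
    then obtain p where p: "p \<in> C" "v \<in> set p"
      using part v unfolding path_partition_def by blast
    then have "is_path E p" "set p \<subseteq> V" using part by (auto simp: path_partition_def)
    then consider "v = hd p" | q u where "p = q @ [u, v]"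
      using path_through_leaf[OF _ _ leaf p(2)] by blast
    then show ?thesis
    proof cases
      case 1
      then have "p = v # tl p" using p(2) by (cases p) auto
      then show ?thesis by (rule reducible_path_head[OF adm leaf p(1)])
    next
      case 2
      then show ?thesis
        using reducible_pivot_path_end[OF adm leaf p(1)] reducible_pair_path_end[OF adm leaf p(1)]
        by blast
    qed
  qed
qed

lemma admissible_heads_determine:
  fixes a :: "nat \<Rightarrow> nat \<Rightarrow> 'a::field"
  assumes acyclic: "\<nexists>xs. is_cycle E xs" and "admissible E a V U C"
  shows "heads_determine a V C"
proof -
  have "finite V" using assms(2) by (simp add: admissible_def)
  then show ?thesis using assms(2)
  proof (induction V arbitrary: a U C rule: finite_psubset_induct)
    case (psubset V)
    show ?case
    proof (cases "V = {}")
      case True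
      then show ?thesis by (simp add: heads_determine_def)
    next
      case False
      then obtain a' :: "nat \<Rightarrow> nat \<Rightarrow> 'a" and V' U' C' where "V' \<subset> V" "admissible E a' V' U' C'"
        "heads_determine a' V' C' \<longrightarrow> heads_determine a V C"
        using admissible_reducible[OF psubset.prems False acyclic] unfolding reducible_def by blast
      then show ?thesis using psubset.IH by blast
    qed
  qed
qed

section \<open>Matrices\<close>

lemma kernel_on_mat_kernel:
  fixes A :: "'a::field mat"
  assumes "A \<in> carrier_mat n n" "x \<in> mat_kernel A"
  shows "kernel_on (\<lambda>i j. A $$ (i, j)) {0..<n} (\<lambda>j. x $ j)"
  unfolding kernel_on_def
proof
  fix i assume i: "i \<in> {0..<n}"
  have x: "x \<in> carrier_vec n" and Ax: "A *\<^sub>v x = 0\<^sub>v n" using mat_kernelD[OF assms] by auto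
  have "(A *\<^sub>v x) $ i = (\<Sum>j\<in>{0..<n}. A $$ (i, j) * x $ j)"
    using assms(1) x i by (simp add: scalar_prod_def)
  then show "(\<Sum>j\<in>{0..<n}. A $$ (i, j) * x $ j) = 0" using Ax i by simp
qed

lemma (in linear_map) lin_indpt_image:
  assumes inj: "inj_on T (carrier V)" and B: "B \<subseteq> carrier V" "finite B"
    and li: "V.module.lin_indpt B"
  shows "W.module.lin_indpt (T ` B)"
proof (rule W.module.finite_lin_indpt2)
  show "finite (T ` B)" "T ` B \<subseteq> carrier W" using B by auto
  fix c assume c: "c \<in> T ` B \<rightarrow> carrier K" and comb: "W.module.lincomb c (T ` B) = \<zero>\<^bsub>W\<^esub>"
  have "T (V.module.lincomb (c \<circ> T) B) = T \<zero>\<^bsub>V\<^esub>"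
    using lincomb_linear_image[OF inj B(1) c B(2)] comb by simp
  moreover have "V.module.lincomb (c \<circ> T) B \<in> carrier V"
    using B c by (intro V.module.lincomb_closed) auto
  ultimately have "V.module.lincomb (c \<circ> T) B = \<zero>\<^bsub>V\<^esub>" using inj by (simp add: inj_on_def)
  moreover have "c \<circ> T \<in> B \<rightarrow> carrier K" using c by auto
  ultimately have "c \<circ> T \<in> B \<rightarrow> {\<zero>\<^bsub>K\<^esub>}" using V.not_lindepD[OF li B(2) subset_refl] by blast
  then show "\<forall>v\<in>T ` B. c v = \<zero>\<^bsub>K\<^esub>" by auto
qed

lemma kernel_dim_le_of_linear:
  fixes A :: "'a::field mat" and T :: "'a vec \<Rightarrow> 'a vec"
  assumes A: "A \<in> carrier_mat m n"
    and add: "\<And>x y. x \<in> mat_kernel A \<Longrightarrow> y \<in> mat_kernel A \<Longrightarrow> T (x + y) = T x + T y"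
    and smult: "\<And>c x. x \<in> mat_kernel A \<Longrightarrow> T (c \<cdot>\<^sub>v x) = c \<cdot>\<^sub>v T x"
    and carrier: "\<And>x. T x \<in> carrier_vec k"
    and zero: "\<And>x. x \<in> mat_kernel A \<Longrightarrow> T x = 0\<^sub>v k \<Longrightarrow> x = 0\<^sub>v n"
  shows "kernel_dim A \<le> k"
proof -
  interpret K: kernel m n A by unfold_locales (rule A)
  interpret W: vec_space "TYPE('a)" k .
  have hom: "T \<in> module_hom class_ring K.VK (module_vec TYPE('a) k)"
    using add smult carrier by (auto simp: module_hom_def module_vec_def)
  have VK: "module class_ring K.VK" and Wk: "module class_ring (module_vec TYPE('a) k)"
    using K.Ker.vectorspace_axioms W.vectorspace_axioms by (simp_all add: vectorspace_def)
  interpret T: linear_map class_ring K.VK "module_vec TYPE('a) k" T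
    by (rule linear_map.intro[OF K.Ker.vectorspace_axioms vec_vs mod_hom.intro[OF VK Wk]])
      (unfold_locales, rule hom)
  have "{x \<in> mat_kernel A. T x = 0\<^sub>v k} = {0\<^sub>v n}"
    using zero K.Ker.zero_closed T.f0_is_0 by auto
  then have inj: "inj_on T (mat_kernel A)" using T.Ke0_imp_inj by (simp add: T.ker_def)
  obtain B where fin: "finite B" and basis: "K.basis B"
    using kernel_basis_exists[OF A] by blast
  have BK: "B \<subseteq> mat_kernel A" and li: "K.lin_indpt B"
    using basis by (auto simp: K.Ker.basis_def)
  have "W.lin_indpt (T ` B)" using T.lin_indpt_image[OF _ _ fin] inj BK li by simp
  moreover have "T ` B \<subseteq> carrier_vec k" using carrier by auto
  ultimately have "card (T ` B) \<le> k" using W.li_le_dim(2)[OF W.fin_dim] W.dim_is_n by simp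
  moreover have "card (T ` B) = kernel_dim A"
    using card_image[OF inj_on_subset[OF inj BK]] K.Ker.dim_basis[OF fin basis] by simp
  ultimately show ?thesis by simp
qed

lemma kernel_dim_le_card:
  fixes A :: "'a::field mat"
  assumes A: "A \<in> carrier_mat m n" and F: "F \<subseteq> {0..<n}"
    and vanish: "\<And>x. x \<in> mat_kernel A \<Longrightarrow> \<forall>f\<in>F. x $ f = 0 \<Longrightarrow> x = 0\<^sub>v n"
  shows "kernel_dim A \<le> card F"
proof -
  define fs where "fs = sorted_list_of_set F"
  have "finite F" using F finite_subset by blast
  then have set_fs: "set fs = F" and len_fs: "length fs = card F" by (simp_all add: fs_def)
  have fs_less: "fs ! r < n" if "r < card F" for r
    using F nth_mem[of r fs] that set_fs len_fs by auto
  have carrier: "x \<in> carrier_vec n" if "x \<in> mat_kernel A" for x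
    using mat_kernelD(1)[OF A that] .
  define T where "T x = vec (card F) (\<lambda>r. x $ (fs ! r))" for x :: "'a vec"
  show ?thesis
  proof (rule kernel_dim_le_of_linear[OF A, of T])
    show "T (x + y) = T x + T y" if "x \<in> mat_kernel A" "y \<in> mat_kernel A" for x y
      using carrier[OF that(1)] carrier[OF that(2)] fs_less by (intro eq_vecI) (auto simp: T_def)
    show "T (c \<cdot>\<^sub>v x) = c \<cdot>\<^sub>v T x" if "x \<in> mat_kernel A" for c x
      using carrier[OF that] fs_less by (intro eq_vecI) (auto simp: T_def)
    show "T x \<in> carrier_vec (card F)" for x by (simp add: T_def)
    fix x assume x: "x \<in> mat_kernel A" and "T x = 0\<^sub>v (card F)"
    have "x $ f = 0" if "f \<in> F" for f
    proof -
      have "f \<in> set fs" using that set_fs by simp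
      then obtain r where "r < card F" "fs ! r = f" using len_fs by (auto simp: in_set_conv_nth)
      then show ?thesis using arg_cong[OF \<open>T x = 0\<^sub>v (card F)\<close>, of "\<lambda>v. v $ r"] by (simp add: T_def)
    qed
    then show "x = 0\<^sub>v n" using vanish[OF x] by blast
  qed
qed

lemma invertible_mat_mult_vec_eq_0:
  fixes M :: "'a::field mat"
  assumes "invertible_mat M" "M \<in> carrier_mat m m" "z \<in> carrier_vec m" "M *\<^sub>v z = 0\<^sub>v m"
  shows "z = 0\<^sub>v m"
proof -
  obtain B where MB: "M * B = 1\<^sub>m m" and BM: "B * M = 1\<^sub>m (dim_row B)"
    using assms(1,2) unfolding invertible_mat_def inverts_mat_def by auto
  have "dim_row B = m" "dim_col B = m"
    using arg_cong[OF BM, of dim_col] arg_cong[OF MB, of dim_col] assms(2) by auto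
  then have B: "B \<in> carrier_mat m m" by auto
  have "z = (B * M) *\<^sub>v z" using BM B assms(3) by simp
  also have "\<dots> = B *\<^sub>v (M *\<^sub>v z)" using B assms(2,3) by simp
  also have "\<dots> = 0\<^sub>v m" using assms(4) B by (intro eq_vecI) auto
  finally show ?thesis .
qed

lemma bij_betw_pick:
  assumes "finite S"
  shows "bij_betw (pick S) {..<card S} S"
proof (rule bij_betw_imageI)
  show "inj_on (pick S) {..<card S}"
  proof (rule inj_onI)
    fix r s assume "r \<in> {..<card S}" "s \<in> {..<card S}" "pick S r = pick S s"
    then show "r = s"
      using pick_mono[of r S s] pick_mono[of s S r] by (cases r s rule: linorder_cases) auto
  qed
  show "pick S ` {..<card S} = S"
  proof
    show "pick S ` {..<card S} \<subseteq> S" using pick_in_set by auto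
    show "S \<subseteq> pick S ` {..<card S}"
    proof
      fix j assume "j \<in> S"
      then have "card {a \<in> S. a < j} < card S"
        using assms by (intro psubset_card_mono) auto
      moreover have "pick S (card {a \<in> S. a < j}) = j" by (rule pick_card_in_set[OF \<open>j \<in> S\<close>])
      ultimately show "j \<in> pick S ` {..<card S}"
        using image_eqI[of j "pick S" "card {a \<in> S. a < j}" "{..<card S}"] by simp
    qed
  qed
qed

text \<open>Rows and columns of \<open>submatrix A S S\<close> are indexed by the increasing enumeration
  \<open>pick S\<close> of \<open>S\<close>.\<close>

lemma nonsingular_on_submatrix:
  fixes A :: "'a::field mat"
  assumes A: "A \<in> carrier_mat n n" and S: "S \<subseteq> {0..<n}"
    and inv: "invertible_mat (submatrix A S S)"
  shows "nonsingular_on (\<lambda>i j. A $$ (i, j)) S"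
  unfolding nonsingular_on_def
proof (intro allI impI)
  fix y assume ker: "kernel_on (\<lambda>i j. A $$ (i, j)) S y"
  define m where "m = card S"
  have "finite S" using S finite_subset by blast
  then have bij: "bij_betw (pick S) {..<m} S" unfolding m_def by (rule bij_betw_pick)
  have rows: "{i. i < n \<and> i \<in> S} = S" using S by auto
  define M where "M = submatrix A S S"
  have dimA: "dim_row A = n" "dim_col A = n" using A by auto
  have "dim_row M = m" "dim_col M = m" unfolding M_def dim_submatrix dimA rows m_def by simp_all
  then have M: "M \<in> carrier_mat m m" by auto
  have M_index: "M $$ (r, s) = A $$ (pick S r, pick S s)" if "r < m" "s < m" for r s
    using submatrix_index[of r A S s S] that dimA by (simp add: M_def rows m_def)
  define z where "z = vec m (\<lambda>r. y (pick S r))"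
  have Mz: "M *\<^sub>v z = 0\<^sub>v m"
  proof (rule eq_vecI)
    fix r assume "r < dim_vec (0\<^sub>v m :: 'a vec)"
    then have r: "r < m" by simp
    have "(M *\<^sub>v z) $ r = (\<Sum>s<m. A $$ (pick S r, pick S s) * y (pick S s))"
      using M r M_index by (simp add: scalar_prod_def z_def lessThan_atLeast0)
    also have "\<dots> = (\<Sum>j\<in>S. A $$ (pick S r, j) * y j)"
      by (rule sum.reindex_bij_betw[OF bij])
    also have "\<dots> = 0" using ker bij_betwE[OF bij] r by (simp add: kernel_on_def)
    finally show "(M *\<^sub>v z) $ r = 0\<^sub>v m $ r" using r by simp
  qed (use M in simp)
  have "z \<in> carrier_vec m" by (simp add: z_def)
  then have z0: "z = 0\<^sub>v m" by (rule invertible_mat_mult_vec_eq_0[OF inv[folded M_def] M _ Mz])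
  show "\<forall>j\<in>S. y j = 0"
  proof
    fix j assume "j \<in> S"
    then have "j \<in> pick S ` {..<m}" using bij by (simp add: bij_betw_def)
    then obtain r where r: "r < m" "pick S r = j" by auto
    have "z $ r = 0" using z0 r(1) by simp
    then show "y j = 0" using r by (simp add: z_def)
  qed
qed

lemma nonsingular_on_UN:
  assumes fin: "finite (\<Union>i\<in>I. S i)"
    and blocks: "\<And>i. i \<in> I \<Longrightarrow> nonsingular_on a (S i)"
    and off_block: "\<And>i i' r l. i \<in> I \<Longrightarrow> i' \<in> I \<Longrightarrow> r \<in> S i \<Longrightarrow> l \<in> S i' - S i \<Longrightarrow> a r l = 0"
  shows "nonsingular_on a (\<Union>i\<in>I. S i)"
  unfolding nonsingular_on_def
proof (intro allI impI ballI)
  fix y j assume ker: "kernel_on a (\<Union>i\<in>I. S i) y" and "j \<in> (\<Union>i\<in>I. S i)"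
  then obtain i where i: "i \<in> I" "j \<in> S i" by blast
  let ?U = "\<Union>i\<in>I. S i"
  have "\<forall>r\<in>?U - (?U - S i). \<forall>l\<in>?U - S i. a r l * y l = 0"
  proof (intro ballI)
    fix r l assume "r \<in> ?U - (?U - S i)" "l \<in> ?U - S i"
    then obtain i' where "i' \<in> I" "r \<in> S i" "l \<in> S i' - S i" by blast
    then show "a r l * y l = 0" using off_block[OF i(1)] by simp
  qed
  then have "kernel_on a (?U - (?U - S i)) y" by (intro kernel_on_Diff[OF fin _ ker]) auto
  moreover have "?U - (?U - S i) = S i" using i(1) by blast
  ultimately have "kernel_on a (S i) y" by simp
  then show "y j = 0" using blocks[OF i(1)] i(2) by (simp add: nonsingular_on_def)
qed

lemma nonsingular_on_independent_blocks:
  fixes A :: "'a::field mat"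
  assumes A: "A \<in> carrier_mat n n" and pattern: "has_pattern E (\<lambda>i j. A $$ (i, j)) {0..<n}"
    and S: "\<And>i. i \<in> I \<Longrightarrow> S i \<subseteq> {0..<n}"
    and independent: "\<And>i i'. i \<in> I \<Longrightarrow> i' \<in> I \<Longrightarrow> i \<noteq> i' \<Longrightarrow> independent_subtrees E (S i) (S i')"
    and invertible: "\<And>i. i \<in> I \<Longrightarrow> invertible_mat (submatrix A (S i) (S i))"
  shows "nonsingular_on (\<lambda>i j. A $$ (i, j)) (\<Union>i\<in>I. S i)"
proof (rule nonsingular_on_UN)
  have "(\<Union>i\<in>I. S i) \<subseteq> {0..<n}" using S by blast
  then show "finite (\<Union>i\<in>I. S i)" using finite_subset by blast
  show "nonsingular_on (\<lambda>i j. A $$ (i, j)) (S i)" if "i \<in> I" for i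
    using nonsingular_on_submatrix[OF A S[OF that] invertible[OF that]] .
  show "A $$ (r, l) = 0" if "i \<in> I" "i' \<in> I" "r \<in> S i" "l \<in> S i' - S i" for i i' r l
  proof -
    have "i \<noteq> i'" "r \<noteq> l" using that by auto
    then have "{r, l} \<notin> E" using independent that by (auto simp: independent_subtrees_def)
    moreover have "r \<in> {0..<n}" "l \<in> {0..<n}" using S[OF that(1)] S[OF that(2)] that by auto
    ultimately show ?thesis using has_patternD[OF pattern _ _ \<open>r \<noteq> l\<close>] by blast
  qed
qed

lemma path_cover_imp_path_partition:
  assumes "path_cover E W C"
  shows "path_partition E W C"
proof -
  have "is_path E p" if "induced_path E p" for p
    using that unfolding induced_path_def is_path_def successively_conv_nth by auto
  then show ?thesis using assms unfolding path_cover_def path_partition_def by blast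
qed

lemma simple_graph_on_no_loop:
  assumes "simple_graph_on n E"
  shows "{w} \<notin> E"
proof
  assume "{w} \<in> E"
  then obtain i j where "i \<noteq> j" "{w} = {i, j}" using assms unfolding simple_graph_on_def by blast
  then have "i \<in> {w}" "j \<in> {w}" by auto
  with \<open>i \<noteq> j\<close> show False by simp
qed

lemma path_cover_number_attained:
  assumes "simple_graph_on n E" "finite W"
  obtains C where "path_cover E W C" "card C = path_cover_number E W"
proof -
  have "path_cover E W ((\<lambda>w. [w]) ` W)"
    using assms simple_graph_on_no_loop[OF assms(1)]
    unfolding path_cover_def induced_path_def by auto
  then have "\<exists>k C. path_cover E W C \<and> card C = k" by blast
  from LeastI_ex[OF this] show ?thesis
    using that unfolding path_cover_number_def by blast
qed

lemma kernel_dim_le_path_partition: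
  fixes A :: "'a::field mat"
  assumes A: "A \<in> carrier_mat n n" and acyclic: "\<nexists>xs. is_cycle E xs"
    and pattern: "has_pattern E (\<lambda>i j. A $$ (i, j)) {0..<n}"
    and U: "U \<subseteq> {0..<n}" "nonsingular_on (\<lambda>i j. A $$ (i, j)) U"
    and part: "path_partition E ({0..<n} - U) C"
  shows "kernel_dim A \<le> card C"
proof -
  have heads: "heads_determine (\<lambda>i j. A $$ (i, j)) {0..<n} C"
    by (rule admissible_heads_determine[OF acyclic]) (use pattern U part in \<open>simp add: admissible_def\<close>)
  have "kernel_dim A \<le> card (hd ` C)"
  proof (rule kernel_dim_le_card[OF A])
    show "hd ` C \<subseteq> {0..<n}"
    proof
      fix h assume "h \<in> hd ` C"
      then obtain p where p: "p \<in> C" "h = hd p" by blast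
      then have "p \<noteq> []" "set p \<subseteq> {0..<n} - U"
        using part by (auto simp: path_partition_def is_path_def)
      then show "h \<in> {0..<n}" using p(2) hd_in_set by blast
    qed
    fix x assume x: "x \<in> mat_kernel A" and "\<forall>f\<in>hd ` C. x $ f = 0"
    then have "x $ j = 0" if "j < n" for j
      using heads_determineD[OF heads kernel_on_mat_kernel[OF A x]] that by simp
    then show "x = 0\<^sub>v n" using mat_kernelD(1)[OF A x] by (intro eq_vecI) auto
  qed
  also have "\<dots> \<le> card C" using part by (intro card_image_le) (simp add: path_partition_def)
  finally show ?thesis .
qed

theorem mainTheorem8:
  fixes n c :: nat and E :: "nat set set" and A :: "real mat" and S :: "nat \<Rightarrow> nat set"
  assumes "forest n E"
    and "in_R n E A"
    and "c \<ge> 1"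
    and "\<forall>i<c. is_subtree n E (S i)"
    and "\<forall>i<c. \<forall>j<c. i \<noteq> j \<longrightarrow> independent_subtrees E (S i) (S j)"
    and "\<forall>i<c. invertible_mat (submatrix A (S i) (S i))"
  shows "kernel_dim A \<le> path_cover_number E ({0..<n} - (\<Union>i<c. S i))"
proof -
  let ?U = "\<Union>i<c. S i"
  have A: "A \<in> carrier_mat n n" and pattern: "has_pattern E (\<lambda>i j. A $$ (i, j)) {0..<n}"
    using assms(2) by (auto simp: in_R_def has_pattern_def)
  have acyclic: "\<nexists>xs. is_cycle E xs" and simple: "simple_graph_on n E"
    using assms(1) by (simp_all add: forest_def)
  have S: "S i \<subseteq> {0..<n}" if "i < c" for i using assms(4) that by (simp add: is_subtree_def)
  have nonsingular: "nonsingular_on (\<lambda>i j. A $$ (i, j)) ?U"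
    by (rule nonsingular_on_independent_blocks[OF A pattern]) (use S assms(5,6) in auto)
  obtain C where C: "path_cover E ({0..<n} - ?U) C" "card C = path_cover_number E ({0..<n} - ?U)"
    using path_cover_number_attained[OF simple, of "{0..<n} - ?U"] by auto
  have "?U \<subseteq> {0..<n}" using S by blast
  from kernel_dim_le_path_partition[OF A acyclic pattern this nonsingular
      path_cover_imp_path_partition[OF C(1)]]
  show ?thesis using C(2) by simp
qed

end
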